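(* If the Markov chain $\mathcal{M}$ is started from a connected configuration of particles, then every configuration reached during its execution is connected.
   Context: Let $\Gamma$ be the triangular lattice; a configuration is a finite set of occupied vertices ("locations") of $\Gamma$, each occupied by one particle; it is connected if the subgraph induced by occupied locations is connected. For a location $\ell$, $N(\ell)$ is the set of particles at locations adjacent to $\ell$. For adjacent $\ell,\ell'$, let $\mathbb{S}=N(\ell)\cap N(\ell')$ and $N(\ell\cup\ell')=(N(\ell)\cup N(\ell'))$ minus particles located at $\ell$ or $\ell'$. Property 1: $|\mathbb{S}|\in\{1,2\}$ and every particle in $N(\ell\cup\ell')$ is connected to a particle of $\mathbb{S}$ by a lattice path all of whose vertices are particles of $N(\ell\cup\ell')$. Property 2: $|\mathbb{S}|=0$; each of $\ell,\ell'$ has at least one adjacent particle other than one located at the other location; the particles of $N(\ell)$ not at $\ell'$ are connected by paths within this set; the particles of $N(\ell')$ not at $\ell$ are connected by paths within this set. One step of $\mathcal{M}$ (bias $\lambda>0$) from $\sigma$: choose a particle $P$ uniformly (location $\ell$), a neighbor $\ell'$ of $\ell$ uniformly among six, and $q$ uniform in $(0,1)$. If $\ell'$ is occupied, do nothing. Otherwise let $t$ (resp. $t'$) be the number of triangular faces incident to $\ell$ (resp. $\ell'$) with all three vertices occupied when $P$ is at $\ell$ (resp. at $\ell'$); move $P$ to $\ell'$ if (1) $\ell$ does not have exactly five occupied neighbors, (2) $\ell,\ell'$ satisfy Property 1 or 2, and (3) $q<\lambda^{t'-t}$; else do nothing. *)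

theory Defs
  imports Complex_Main
begin

text \<open>Triangular lattice: vertices Z x Z (axial coordinates); each vertex (x,y) is adjacent
to the six vertices (x+-1,y), (x,y+-1), (x+1,y-1), (x-1,y+1).\<close>

type_synonym loc = "int \<times> int"

definition dirs :: "loc set" where
  "dirs = {(1,0), (-1,0), (0,1), (0,-1), (1,-1), (-1,1)}"

definition adj :: "loc \<Rightarrow> loc \<Rightarrow> bool" where
  "adj l l' \<longleftrightarrow> (fst l' - fst l, snd l' - snd l) \<in> dirs"

text \<open>A configuration is a finite set of occupied locations (one particle per location).\<close>

definition path_in :: "loc set \<Rightarrow> loc \<Rightarrow> loc \<Rightarrow> bool" where
  "path_in A x y \<longleftrightarrow> x \<in> A \<and> y \<in> A \<and>
     (\<lambda>a b. a \<in> A \<and> b \<in> A \<and> adj a b)\<^sup>*\<^sup>* x y"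

definition connected_conf :: "loc set \<Rightarrow> bool" where
  "connected_conf A \<longleftrightarrow> (\<forall>x\<in>A. \<forall>y\<in>A. path_in A x y)"

definition nbrs :: "loc set \<Rightarrow> loc \<Rightarrow> loc set" where
  "nbrs \<sigma> l = {p \<in> \<sigma>. adj l p}"

definition prop1 :: "loc set \<Rightarrow> loc \<Rightarrow> loc \<Rightarrow> bool" where
  "prop1 \<sigma> l l' \<longleftrightarrow>
     (let S = nbrs \<sigma> l \<inter> nbrs \<sigma> l';
          NU = (nbrs \<sigma> l \<union> nbrs \<sigma> l') - {l, l'}
      in card S \<in> {1, 2} \<and> (\<forall>p\<in>NU. \<exists>s\<in>S. path_in NU p s))"

definition prop2 :: "loc set \<Rightarrow> loc \<Rightarrow> loc \<Rightarrow> bool" where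
  "prop2 \<sigma> l l' \<longleftrightarrow>
     nbrs \<sigma> l \<inter> nbrs \<sigma> l' = {} \<and>
     nbrs \<sigma> l - {l'} \<noteq> {} \<and> nbrs \<sigma> l' - {l} \<noteq> {} \<and>
     connected_conf (nbrs \<sigma> l - {l'}) \<and> connected_conf (nbrs \<sigma> l' - {l})"

definition is_face :: "loc set \<Rightarrow> bool" where
  "is_face F \<longleftrightarrow> (\<exists>a b c. F = {a, b, c} \<and> adj a b \<and> adj b c \<and> adj a c)"

definition tri_count :: "loc set \<Rightarrow> loc \<Rightarrow> nat" where
  "tri_count \<sigma> l = card {F. is_face F \<and> l \<in> F \<and> F \<subseteq> \<sigma>}"

text \<open>One step of M with bias lam from configuration \<sigma>, given the random choices:
  the chosen particle's location l (in \<sigma>), the chosen neighbouring location l', and q in (0,1).\<close>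
definition mstep :: "real \<Rightarrow> loc set \<Rightarrow> loc \<Rightarrow> loc \<Rightarrow> real \<Rightarrow> loc set" where
  "mstep lam \<sigma> l l' q =
     (if l' \<in> \<sigma> then \<sigma>
      else (let \<sigma>' = insert l' (\<sigma> - {l});
                t = tri_count \<sigma> l;
                t' = tri_count \<sigma>' l'
            in if card (nbrs \<sigma> l) \<noteq> 5 \<and> (prop1 \<sigma> l l' \<or> prop2 \<sigma> l l')
                  \<and> q < lam powr (real t' - real t)
               then \<sigma>' else \<sigma>))"

text \<open>Configurations reached during an execution of M started from \<sigma>0
  (over all possible outcomes of the random choices).\<close>
inductive reached :: "real \<Rightarrow> loc set \<Rightarrow> loc set \<Rightarrow> bool" for lam \<sigma>0 where
  start: "reached lam \<sigma>0 \<sigma>0"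
| step: "\<lbrakk>reached lam \<sigma>0 \<sigma>; l \<in> \<sigma>; adj l l'; 0 < q; q < 1\<rbrakk>
          \<Longrightarrow> reached lam \<sigma>0 (mstep lam \<sigma> l l' q)"

end

theory Submission
  imports Defs
begin

text \<open>Moving the particle at \<open>l\<close> to an empty location \<open>l'\<close> keeps the configuration connected
  as soon as \<open>l'\<close> touches some other particle and any two former neighbours of \<open>l\<close> are still
  joined after the move: a path of the old configuration through \<open>l\<close> enters and leaves \<open>l\<close>
  through two of its neighbours and can be rerouted between them. Properties 1 and 2 both
  guarantee these two conditions -- under Property 1 every neighbour of \<open>l\<close> reaches \<open>l'\<close> through
  the common neighbourhood \<open>S\<close>, under Property 2 the neighbours of \<open>l\<close> are joined among
  themselves -- so connectivity is invariant under every step of the chain.\<close>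

lemma dirs_uminus: "(x, y) \<in> dirs \<Longrightarrow> (- x, - y) \<in> dirs"
  unfolding dirs_def by auto

lemma adj_sym: "adj a b \<Longrightarrow> adj b a"
  using dirs_uminus unfolding adj_def by fastforce

lemma adj_irrefl: "\<not> adj a a"
  unfolding adj_def dirs_def by auto

lemma path_in_refl: "x \<in> A \<Longrightarrow> path_in A x x"
  unfolding path_in_def by auto

lemma path_in_edge: "x \<in> A \<Longrightarrow> y \<in> A \<Longrightarrow> adj x y \<Longrightarrow> path_in A x y"
  unfolding path_in_def by auto

lemma path_in_trans: "path_in A x y \<Longrightarrow> path_in A y z \<Longrightarrow> path_in A x z"
  unfolding path_in_def by auto

lemma path_in_sym:
  assumes "path_in A x y"
  shows "path_in A y x"
proof -
  have "symp (\<lambda>a b. a \<in> A \<and> b \<in> A \<and> adj a b)"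
    by (auto intro: sympI adj_sym)
  then show ?thesis
    using assms unfolding path_in_def by (auto dest: symp_rtranclp[THEN sympD])
qed

lemma path_in_mono:
  assumes "path_in A x y" "A \<subseteq> B"
  shows "path_in B x y"
proof -
  have "(\<lambda>a b. a \<in> A \<and> b \<in> A \<and> adj a b) \<le> (\<lambda>a b. a \<in> B \<and> b \<in> B \<and> adj a b)"
    using assms(2) by auto
  then show ?thesis
    using assms unfolding path_in_def by (auto dest: rtranclp_mono[THEN predicate2D])
qed

lemma path_in_bypass:
  assumes path: "path_in \<sigma> x y" and "x \<noteq> l" "y \<noteq> l" and sub: "\<sigma> - {l} \<subseteq> B"
    and nbrs_joined: "\<And>u v. u \<in> nbrs \<sigma> l \<Longrightarrow> v \<in> nbrs \<sigma> l \<Longrightarrow> path_in B u v"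
  shows "path_in B x y"
proof -
  have x: "x \<in> \<sigma> - {l}"
    using path \<open>x \<noteq> l\<close> unfolding path_in_def by auto
  txt \<open>While the walk sits at \<open>l\<close>, keep track of the neighbour of \<open>l\<close> it came from.\<close>
  have "(z \<noteq> l \<longrightarrow> path_in B x z) \<and> (z = l \<longrightarrow> (\<exists>u\<in>nbrs \<sigma> l. path_in B x u))"
    if "(\<lambda>a b. a \<in> \<sigma> \<and> b \<in> \<sigma> \<and> adj a b)\<^sup>*\<^sup>* x z" for z
    using that
  proof (induction rule: rtranclp_induct)
    case base
    show ?case using x sub path_in_refl by blast
  next
    case (step z w)
    then have zw: "z \<in> \<sigma>" "w \<in> \<sigma>" "adj z w" by auto
    consider "z = l" | "z \<noteq> l" "w = l" | "z \<noteq> l" "w \<noteq> l" by blast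
    then show ?case
    proof cases
      case 1
      then obtain u where "u \<in> nbrs \<sigma> l" "path_in B x u" using step.IH by blast
      moreover have "w \<noteq> l" using 1 zw(3) adj_irrefl by blast
      moreover have "w \<in> nbrs \<sigma> l" using 1 zw unfolding nbrs_def by auto
      ultimately show ?thesis using nbrs_joined path_in_trans by blast
    next
      case 2
      then have "z \<in> nbrs \<sigma> l" using zw adj_sym unfolding nbrs_def by auto
      then show ?thesis using 2 step.IH by blast
    next
      case 3
      then have "path_in B z w" using zw sub by (intro path_in_edge) auto
      then show ?thesis using 3 step.IH path_in_trans by blast
    qed
  qed
  then show ?thesis
    using path \<open>y \<noteq> l\<close> unfolding path_in_def by blast
qed

lemma connected_conf_insert_adj:
  assumes joined: "\<And>x y. x \<in> A \<Longrightarrow> y \<in> A \<Longrightarrow> path_in (insert l' A) x y"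
    and "a \<in> A" "adj l' a"
  shows "connected_conf (insert l' A)"
proof -
  have to_A: "\<exists>b\<in>A. path_in (insert l' A) x b" if "x \<in> insert l' A" for x
  proof (cases "x = l'")
    case True
    then show ?thesis using assms(2,3) by (intro bexI[of _ a] path_in_edge) auto
  next
    case False
    then show ?thesis using that by (intro bexI[of _ x] path_in_refl) auto
  qed
  show ?thesis
    unfolding connected_conf_def
  proof (intro ballI)
    fix x y
    assume "x \<in> insert l' A" "y \<in> insert l' A"
    then obtain a b where "a \<in> A" "b \<in> A" "path_in (insert l' A) x a" "path_in (insert l' A) y b"
      using to_A by blast
    then show "path_in (insert l' A) x y"
      using joined path_in_sym path_in_trans by meson
  qed
qed

definition move_safe :: "loc set \<Rightarrow> loc \<Rightarrow> loc \<Rightarrow> bool" where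
  "move_safe \<sigma> l l' \<longleftrightarrow> (\<exists>a\<in>\<sigma> - {l}. adj l' a) \<and>
     (\<forall>u\<in>nbrs \<sigma> l. \<forall>v\<in>nbrs \<sigma> l. path_in (insert l' (\<sigma> - {l})) u v)"

lemma connected_conf_move:
  assumes conn: "connected_conf \<sigma>" and safe: "move_safe \<sigma> l l'"
  shows "connected_conf (insert l' (\<sigma> - {l}))"
proof -
  obtain a where "a \<in> \<sigma> - {l}" "adj l' a"
    using safe unfolding move_safe_def by blast
  moreover have "path_in (insert l' (\<sigma> - {l})) x y" if "x \<in> \<sigma> - {l}" "y \<in> \<sigma> - {l}" for x y
    using that conn safe path_in_bypass[of \<sigma> x y l "insert l' (\<sigma> - {l})"]
    unfolding connected_conf_def move_safe_def by blast
  ultimately show ?thesis by (rule connected_conf_insert_adj[rotated])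
qed

lemma prop1_move_safe:
  assumes p: "prop1 \<sigma> l l'" and l': "l' \<notin> \<sigma>"
  shows "move_safe \<sigma> l l'"
proof -
  define S where "S = nbrs \<sigma> l \<inter> nbrs \<sigma> l'"
  define NU where "NU = (nbrs \<sigma> l \<union> nbrs \<sigma> l') - {l, l'}"
  define B where "B = insert l' (\<sigma> - {l})"
  have "card S \<in> {1, 2}" and to_S: "\<forall>p\<in>NU. \<exists>s\<in>S. path_in NU p s"
    using p unfolding prop1_def Let_def S_def NU_def by auto
  then have "S \<noteq> {}" by auto
  then obtain s0 where "s0 \<in> S" by blast
  have S_adj: "s \<in> \<sigma> - {l}" "adj l' s" if "s \<in> S" for s
    using that adj_irrefl[of l] unfolding S_def nbrs_def by auto
  have "NU \<subseteq> B" unfolding NU_def B_def nbrs_def by auto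
  have to_target: "path_in B u l'" if "u \<in> nbrs \<sigma> l" for u
  proof -
    have "u \<in> NU" using that l' adj_irrefl[of l] unfolding NU_def nbrs_def by auto
    then obtain s where s: "s \<in> S" "path_in NU u s" using to_S by blast
    have "path_in B u s" using s(2) \<open>NU \<subseteq> B\<close> by (rule path_in_mono)
    moreover have "path_in B s l'"
      using S_adj[OF s(1)] adj_sym unfolding B_def by (intro path_in_edge) auto
    ultimately show ?thesis by (rule path_in_trans)
  qed
  have "path_in B u v" if "u \<in> nbrs \<sigma> l" "v \<in> nbrs \<sigma> l" for u v
    using that to_target path_in_sym path_in_trans by meson
  then show ?thesis
    unfolding move_safe_def B_def[symmetric] using \<open>s0 \<in> S\<close> S_adj by blast
qed

lemma prop2_move_safe:
  assumes p: "prop2 \<sigma> l l'" and l': "l' \<notin> \<sigma>"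
  shows "move_safe \<sigma> l l'"
proof -
  have "nbrs \<sigma> l - {l'} = nbrs \<sigma> l"
    using l' unfolding nbrs_def by auto
  then have conn: "connected_conf (nbrs \<sigma> l)" and "nbrs \<sigma> l' - {l} \<noteq> {}"
    using p unfolding prop2_def by auto
  then have "\<exists>a\<in>\<sigma> - {l}. adj l' a"
    unfolding nbrs_def by auto
  moreover have "nbrs \<sigma> l \<subseteq> insert l' (\<sigma> - {l})"
    using adj_irrefl[of l] unfolding nbrs_def by auto
  then have "path_in (insert l' (\<sigma> - {l})) u v" if "u \<in> nbrs \<sigma> l" "v \<in> nbrs \<sigma> l" for u v
    using that conn path_in_mono unfolding connected_conf_def by blast
  ultimately show ?thesis unfolding move_safe_def by blast
qed

lemma connected_conf_mstep:
  assumes "connected_conf \<sigma>"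
  shows "connected_conf (mstep lam \<sigma> l l' q)"
proof (cases "l' \<notin> \<sigma> \<and> (prop1 \<sigma> l l' \<or> prop2 \<sigma> l l')")
  case True
  then have "move_safe \<sigma> l l'" using prop1_move_safe prop2_move_safe by blast
  then show ?thesis
    using assms connected_conf_move unfolding mstep_def Let_def by auto
next
  case False
  then show ?thesis using assms unfolding mstep_def Let_def by auto
qed

theorem lemma4:
  fixes lam :: real and \<sigma>0 \<sigma> :: "loc set"
  assumes "0 < lam"
    and "finite \<sigma>0"
    and "connected_conf \<sigma>0"
    and "reached lam \<sigma>0 \<sigma>"
  shows "connected_conf \<sigma>"
  using assms(4)
proof (induction rule: reached.induct)
  case start
  show ?case by (rule assms(3))
next
  case (step \<sigma> l l' q)
  show ?case using step.IH by (rule connected_conf_mstep)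
qed

end
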